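(* Let $(\Omega,\mathcal{F},P_0)$ be a complete probability space, $\epsilon\in(0,1)$, $\mathcal{C}\subseteq\mathcal{F}$ a sub-$\sigma$-algebra, and $\rho$ a sublinear operator on $L^{2+\epsilon}_{\mathcal{F}}(\Omega,P_0)$ with representation set $\mathcal{P}$, satisfying the standing assumptions below. If $\rho$ is stable, then for a given $\xi\in L^{4+2\epsilon}_{\mathcal{F}}(\Omega,P_0)$, $$\sup_{P\in\mathcal{P}}\inf_{\eta\in L^{2+\epsilon}_{\mathcal{C}}(P_0)}E_P[(\xi-\eta)^2]=\max_{P\in\mathcal{P}}\inf_{\eta\in L^{2+\epsilon}_{\mathcal{C}}(P_0)}E_P[(\xi-\eta)^2].$$
   Context: A sublinear operator is a map $\rho:L^{2+\epsilon}_{\mathcal{F}}(\Omega,P_0)\to\mathbb{R}$ that is monotone, constant preserving, sub-additive and positively homogeneous. Its representation set $\mathcal{P}$ is the family of all linear expectations (identified with probability measures $P$) dominated by $\rho$, so $\rho(\xi)=\max_{P\in\mathcal{P}}E_P[\xi]$. Write $f^P=dP/dP_0$, $\mathcal{D}=\{f^P:P\in\mathcal{P}\}$. Standing assumptions: every $P\in\mathcal{P}$ is equivalent to $P_0$; $\mathcal{D}$ is norm-bounded in $L^{1+\frac{2}{\epsilon}}_{\mathcal{F}}(P_0)$ and $\sigma(L^{1+\frac{2}{\epsilon}}(P_0),L^{1+\frac{\epsilon}{2}}(P_0))$-compact. $\rho$ is stable if for each $P\in\mathcal{P}$ the random variable $f^P/E_{P_0}[f^P\mid\mathcal{C}]$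 lies in $\mathcal{D}$. $L^{2+\epsilon}_{\mathcal{C}}(P_0)$ denotes the $\mathcal{C}$-measurable elements of $L^{2+\epsilon}(P_0)$. *)

theory Defs
  imports "HOL-Probability.Probability"
begin

text \<open>Random variables are represented by real-valued functions on the sample space;
  elements of L^p are such functions up to P0-a.e. equality.\<close>

definition Lp :: "'a measure \<Rightarrow> real \<Rightarrow> ('a \<Rightarrow> real) set" where
  "Lp M p = {f. f \<in> borel_measurable M \<and> integrable M (\<lambda>x. \<bar>f x\<bar> powr p)}"

definition Lp_sub :: "'a measure \<Rightarrow> 'a measure \<Rightarrow> real \<Rightarrow> ('a \<Rightarrow> real) set" where
  "Lp_sub M C p = {f. f \<in> Lp M p \<and> f \<in> borel_measurable C}"

definition sublinear_operator :: "'a measure \<Rightarrow> real \<Rightarrow> (('a \<Rightarrow> real) \<Rightarrow> real) \<Rightarrow> bool" where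
  "sublinear_operator M p \<rho> \<longleftrightarrow>
     (\<forall>X\<in>Lp M p. \<forall>Y\<in>Lp M p. (AE x in M. X x \<le> Y x) \<longrightarrow> \<rho> X \<le> \<rho> Y) \<and>
     (\<forall>c::real. \<rho> (\<lambda>_. c) = c) \<and>
     (\<forall>X\<in>Lp M p. \<forall>Y\<in>Lp M p. \<rho> (\<lambda>x. X x + Y x) \<le> \<rho> X + \<rho> Y) \<and>
     (\<forall>X\<in>Lp M p. \<forall>l::real. l \<ge> 0 \<longrightarrow> \<rho> (\<lambda>x. l * X x) = l * \<rho> X)"

definition rep_set :: "'a measure \<Rightarrow> real \<Rightarrow> (('a \<Rightarrow> real) \<Rightarrow> real) \<Rightarrow> 'a measure set" where
  "rep_set M p \<rho> = {P. sets P = sets M \<and> prob_space P \<and> absolutely_continuous M P \<and>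
      (\<forall>X\<in>Lp M p. integrable P X \<and> (\<integral>x. X x \<partial>P) \<le> \<rho> X)}"

definition dens :: "'a measure \<Rightarrow> 'a measure \<Rightarrow> 'a \<Rightarrow> real" where
  "dens M P = (\<lambda>x. enn2real (RN_deriv M P x))"

definition dens_set :: "'a measure \<Rightarrow> real \<Rightarrow> (('a \<Rightarrow> real) \<Rightarrow> real) \<Rightarrow> ('a \<Rightarrow> real) set" where
  "dens_set M p \<rho> = dens M ` rep_set M p \<rho>"

text \<open>The weak topology sigma(L^q, L^r) on L^q (q, r conjugate): the coarsest topology
  making all maps g \<mapsto> E_{P0}[g h], h \<in> L^r, continuous.\<close>
definition weak_Lp_topology :: "'a measure \<Rightarrow> real \<Rightarrow> real \<Rightarrow> ('a \<Rightarrow> real) topology" where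
  "weak_Lp_topology M q r =
     pullback_topology (Lp M q)
       (\<lambda>g. restrict (\<lambda>h. \<integral>x. g x * h x \<partial>M) (Lp M r))
       (product_topology (\<lambda>_. euclideanreal) (Lp M r))"

definition Lp_norm :: "'a measure \<Rightarrow> real \<Rightarrow> ('a \<Rightarrow> real) \<Rightarrow> real" where
  "Lp_norm M p f = (\<integral>x. \<bar>f x\<bar> powr p \<partial>M) powr (1 / p)"

definition stable :: "'a measure \<Rightarrow> 'a measure \<Rightarrow> real \<Rightarrow> (('a \<Rightarrow> real) \<Rightarrow> real) \<Rightarrow> bool" where
  "stable M C p \<rho> \<longleftrightarrow>
     (\<forall>P\<in>rep_set M p \<rho>. \<exists>Q\<in>rep_set M p \<rho>.
        AE x in M. dens M Q x = dens M P x / real_cond_exp M C (dens M P) x)"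

end

theory Submission
  imports Defs
begin

text \<open>
  For \<open>\<eta>\<close> in \<open>L\<^sup>2\<^sup>+\<^sup>\<epsilon>\<close> the function \<open>(\<xi> - \<eta>)\<^sup>2\<close> lies in \<open>L\<^sup>r\<close> with \<open>r = 1 + \<epsilon>/2\<close>, the exponent conjugate
  to \<open>q = 1 + 2/\<epsilon>\<close>, so \<open>E\<^sub>P[(\<xi> - \<eta>)\<^sup>2] = E\<^sub>P\<^sub>0[f\<^sup>P (\<xi> - \<eta>)\<^sup>2]\<close> is a \<open>\<sigma>(L\<^sup>q, L\<^sup>r)\<close>-continuous
  function of the density \<open>f\<^sup>P\<close>. The value \<open>inf\<^sub>\<eta> E\<^sub>P[(\<xi> - \<eta>)\<^sup>2]\<close> is therefore weakly upper
  semicontinuous in \<open>f\<^sup>P\<close> and attains its supremum on the weakly compact set of densities,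
  as soon as the representation set is non-empty.

  By Hahn-Banach there is a linear functional \<open>L \<le> \<rho>\<close>
  on \<open>L\<^sup>2\<^sup>+\<^sup>\<epsilon>\<close>; it is positive with \<open>L 1 = 1\<close>. Such a functional on \<open>L\<^sup>p\<close> of a finite measure
  is continuous along decreasing sequences (a rescaled subsequence of any sequence tending
  to 0 in \<open>L\<^sup>p\<close> is dominated by a single \<open>L\<^sup>p\<close> function), so \<open>A \<mapsto> L 1\<^sub>A\<close> is a probability
  measure representing \<open>L\<close>, and it belongs to the representation set.
\<close>

section \<open>\<open>L\<^sup>p\<close> spaces\<close>

lemma LpI: "f \<in> borel_measurable M \<Longrightarrow> integrable M (\<lambda>x. \<bar>f x\<bar> powr p) \<Longrightarrow> f \<in> Lp M p"
  by (simp add: Lp_def)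

lemma LpD:
  assumes "f \<in> Lp M p"
  shows "f \<in> borel_measurable M" "integrable M (\<lambda>x. \<bar>f x\<bar> powr p)"
  using assms by (auto simp: Lp_def)

lemma Lp_bound:
  assumes "f \<in> borel_measurable M" "g \<in> Lp M p" "0 \<le> p" "AE x in M. \<bar>f x\<bar> \<le> \<bar>g x\<bar>"
  shows "f \<in> Lp M p"
proof (rule LpI[OF assms(1)])
  show "integrable M (\<lambda>x. \<bar>f x\<bar> powr p)"
  proof (rule Bochner_Integration.integrable_bound[OF LpD(2)[OF assms(2)]])
    show "(\<lambda>x. \<bar>f x\<bar> powr p) \<in> borel_measurable M"
      using assms(1) by measurable
    show "AE x in M. norm (\<bar>f x\<bar> powr p) \<le> norm (\<bar>g x\<bar> powr p)"
      using assms(4) by eventually_elim (simp add: powr_mono2 assms(3))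
  qed
qed

lemma Lp_cmult:
  assumes "f \<in> Lp M p"
  shows "(\<lambda>x. c * f x) \<in> Lp M p"
proof (rule LpI)
  show "(\<lambda>x. c * f x) \<in> borel_measurable M"
    using LpD(1)[OF assms] by measurable
  have "integrable M (\<lambda>x. \<bar>c\<bar> powr p * \<bar>f x\<bar> powr p)"
    using LpD(2)[OF assms] by simp
  then show "integrable M (\<lambda>x. \<bar>c * f x\<bar> powr p)"
    by (simp add: abs_mult powr_mult)
qed

lemma Lp_add:
  assumes "f \<in> Lp M p" "g \<in> Lp M p" "0 \<le> p"
  shows "(\<lambda>x. f x + g x) \<in> Lp M p"
proof (rule LpI)
  show meas: "(\<lambda>x. f x + g x) \<in> borel_measurable M"
    using LpD(1)[OF assms(1)] LpD(1)[OF assms(2)] by measurable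
  have pointwise: "\<bar>a + b\<bar> powr p \<le> 2 powr p * (\<bar>a\<bar> powr p + \<bar>b\<bar> powr p)" for a b :: real
  proof -
    have "\<bar>a + b\<bar> powr p \<le> (2 * max \<bar>a\<bar> \<bar>b\<bar>) powr p"
      by (rule powr_mono2) (use assms(3) in auto)
    also have "\<dots> = 2 powr p * max \<bar>a\<bar> \<bar>b\<bar> powr p"
      by (simp add: powr_mult)
    also have "\<dots> \<le> 2 powr p * (\<bar>a\<bar> powr p + \<bar>b\<bar> powr p)"
      by (intro mult_left_mono) (auto simp: max_def)
    finally show ?thesis .
  qed
  have "integrable M (\<lambda>x. 2 powr p * (\<bar>f x\<bar> powr p + \<bar>g x\<bar> powr p))"
    using LpD(2)[OF assms(1)] LpD(2)[OF assms(2)] by simp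
  then show "integrable M (\<lambda>x. \<bar>f x + g x\<bar> powr p)"
  proof (rule Bochner_Integration.integrable_bound)
    show "(\<lambda>x. \<bar>f x + g x\<bar> powr p) \<in> borel_measurable M"
      using meas by measurable
    show "AE x in M. norm (\<bar>f x + g x\<bar> powr p) \<le> norm (2 powr p * (\<bar>f x\<bar> powr p + \<bar>g x\<bar> powr p))"
      using pointwise by (intro AE_I2) simp
  qed
qed

lemma Lp_diff:
  assumes "f \<in> Lp M p" "g \<in> Lp M p" "0 \<le> p"
  shows "(\<lambda>x. f x - g x) \<in> Lp M p"
  using Lp_add[OF assms(1) Lp_cmult[OF assms(2), of "-1"] assms(3)] by simp

lemma Lp_sum:
  assumes "finite S" "\<And>i. i \<in> S \<Longrightarrow> h i \<in> Lp M p" "0 \<le> p" "(\<lambda>x. 0) \<in> Lp M p"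
  shows "(\<lambda>x. \<Sum>i\<in>S. h i x) \<in> Lp M p"
  using assms(1,2)
proof (induction S rule: finite_induct)
  case (insert i S)
  then show ?case
    using Lp_add[where f="h i" and g="\<lambda>x. \<Sum>i\<in>S. h i x", OF _ _ assms(3)] by simp
qed (use assms(4) in simp)

lemma (in finite_measure) Lp_const: "(\<lambda>x. c) \<in> Lp M p"
  by (intro LpI) auto

lemma (in finite_measure) Lp_antimono:
  assumes "0 \<le> p" "p \<le> q"
  shows "Lp M q \<subseteq> Lp M p"
proof
  fix f assume f: "f \<in> Lp M q"
  have pointwise: "\<bar>a\<bar> powr p \<le> 1 + \<bar>a\<bar> powr q" for a :: real
  proof (cases "\<bar>a\<bar> \<le> 1")
    case True
    then have "\<bar>a\<bar> powr p \<le> 1"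
      using assms(1) powr_mono2[of p "\<bar>a\<bar>" 1] by simp
    then show ?thesis
      by (smt (verit) powr_ge_zero)
  next
    case False
    then show ?thesis
      using powr_mono[OF assms(2), of "\<bar>a\<bar>"] by (smt (verit) powr_ge_zero)
  qed
  have "integrable M (\<lambda>x. 1 + \<bar>f x\<bar> powr q)"
    using LpD(2)[OF f] by simp
  then have "integrable M (\<lambda>x. \<bar>f x\<bar> powr p)"
  proof (rule Bochner_Integration.integrable_bound)
    show "(\<lambda>x. \<bar>f x\<bar> powr p) \<in> borel_measurable M"
      using LpD(1)[OF f] by measurable
    show "AE x in M. norm (\<bar>f x\<bar> powr p) \<le> norm (1 + \<bar>f x\<bar> powr q)"
      using pointwise by (intro AE_I2) simp
  qed
  then show "f \<in> Lp M p"
    by (rule LpI[OF LpD(1)[OF f]])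
qed

lemma Lp_square:
  assumes "f \<in> Lp M (2 * r)"
  shows "(\<lambda>x. (f x)\<^sup>2) \<in> Lp M r"
proof (rule LpI)
  show "(\<lambda>x. (f x)\<^sup>2) \<in> borel_measurable M"
    using LpD(1)[OF assms] by measurable
  have "\<bar>(f x)\<^sup>2\<bar> powr r = \<bar>f x\<bar> powr (2 * r)" for x
  proof -
    have "\<bar>(f x)\<^sup>2\<bar> = \<bar>f x\<bar> powr 2"
      by (cases "f x = 0") (simp_all add: powr_numeral)
    then show ?thesis
      by (simp only: powr_powr)
  qed
  then show "integrable M (\<lambda>x. \<bar>(f x)\<^sup>2\<bar> powr r)"
    using LpD(2)[OF assms] by simp
qed

lemma integrable_mult_conjugate_Lp:
  assumes "f \<in> Lp M q" "h \<in> Lp M r" "1 < q" "1 < r" "1 / q + 1 / r = 1"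
  shows "integrable M (\<lambda>x. f x * h x)"
proof (rule Bochner_Integration.integrable_bound)
  show "integrable M (\<lambda>x. \<bar>f x\<bar> powr q / q + \<bar>h x\<bar> powr r / r)"
    using LpD(2)[OF assms(1)] LpD(2)[OF assms(2)] by auto
  show "(\<lambda>x. f x * h x) \<in> borel_measurable M"
    using LpD(1)[OF assms(1)] LpD(1)[OF assms(2)] by measurable
  show "AE x in M. norm (f x * h x) \<le> norm (\<bar>f x\<bar> powr q / q + \<bar>h x\<bar> powr r / r)"
  proof (intro AE_I2)
    fix x
    have "0 \<le> \<bar>f x\<bar> powr q / q + \<bar>h x\<bar> powr r / r"
      using assms(3,4) by simp
    then show "norm (f x * h x) \<le> norm (\<bar>f x\<bar> powr q / q + \<bar>h x\<bar> powr r / r)"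
      using Youngs_inequality[OF assms(3-5) abs_ge_zero abs_ge_zero, of "f x" "h x"]
      by (simp add: abs_mult)
  qed
qed

lemma Lp_root_of_nn_integral_finite:
  assumes p: "0 < p" and W: "W \<in> borel_measurable M" "integral\<^sup>N M W < \<infinity>"
  shows "(\<lambda>x. enn2real (W x) powr (1 / p)) \<in> Lp M p"
proof (rule LpI)
  show "(\<lambda>x. enn2real (W x) powr (1 / p)) \<in> borel_measurable M"
    using W(1) by measurable
  have "integrable M (\<lambda>x. enn2real (W x))"
  proof (rule integrableI_nonneg)
    have "(\<integral>\<^sup>+ x. ennreal (enn2real (W x)) \<partial>M) \<le> integral\<^sup>N M W"
      by (intro nn_integral_mono) (simp add: ennreal_enn2real_if)
    then show "(\<integral>\<^sup>+ x. ennreal (enn2real (W x)) \<partial>M) < \<infinity>"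
      using W(2) by (simp add: le_less_trans)
  qed (use W(1) in auto)
  moreover have "\<bar>enn2real (W x) powr (1 / p)\<bar> powr p = enn2real (W x)" for x
  proof -
    have "1 / p * p = 1"
      using p by simp
    then show ?thesis
      unfolding abs_of_nonneg[OF powr_ge_zero] powr_powr by (simp only: powr_one enn2real_nonneg)
  qed
  ultimately show "integrable M (\<lambda>x. \<bar>enn2real (W x) powr (1 / p)\<bar> powr p)"
    by simp
qed

lemma Lp_dominated_of_summable:
  assumes p: "0 < p" and f: "\<And>k. f k \<in> Lp M p"
    and summable: "summable (\<lambda>k. \<integral>x. \<bar>f k x\<bar> powr p \<partial>M)"
  obtains Y where "Y \<in> Lp M p" "\<And>k. AE x in M. \<bar>f k x\<bar> \<le> Y x"
proof -
  define W where "W x = (\<Sum>k. ennreal (\<bar>f k x\<bar> powr p))" for x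
  have W_meas: "W \<in> borel_measurable M"
    unfolding W_def using LpD(1)[OF f] by measurable
  have "integral\<^sup>N M W = (\<Sum>k. \<integral>\<^sup>+ x. ennreal (\<bar>f k x\<bar> powr p) \<partial>M)"
    unfolding W_def using LpD(1)[OF f] by (intro nn_integral_suminf) measurable
  also have "\<dots> = (\<Sum>k. ennreal (\<integral>x. \<bar>f k x\<bar> powr p \<partial>M))"
    using LpD(2)[OF f] by (simp add: nn_integral_eq_integral)
  also have "\<dots> = ennreal (\<Sum>k. \<integral>x. \<bar>f k x\<bar> powr p \<partial>M)"
    using summable by (intro suminf_ennreal2) auto
  finally have W_finite: "integral\<^sup>N M W < \<infinity>"
    by simp
  have W_AE: "AE x in M. W x \<noteq> \<infinity>"
    using nn_integral_PInf_AE[OF W_meas] W_finite by simp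
  have "AE x in M. \<bar>f k x\<bar> \<le> enn2real (W x) powr (1 / p)" for k
    using W_AE
  proof eventually_elim
    case (elim x)
    have "(\<Sum>j\<in>{k}. ennreal (\<bar>f j x\<bar> powr p)) \<le> W x"
      unfolding W_def by (rule sum_le_suminf) auto
    then have "enn2real (ennreal (\<bar>f k x\<bar> powr p)) \<le> enn2real (W x)"
      using elim by (intro enn2real_mono) (auto simp: top.not_eq_extremum)
    then have "(\<bar>f k x\<bar> powr p) powr (1 / p) \<le> enn2real (W x) powr (1 / p)"
      using p by (intro powr_mono2) simp_all
    then show ?case
      using p by (simp only: powr_powr) simp
  qed
  then show thesis
    using that Lp_root_of_nn_integral_finite[OF p W_meas W_finite] by blast
qed

lemma integral_powr_tendsto_zero:
  assumes p: "0 < p" and Z: "\<And>n. Z n \<in> borel_measurable M" and Y: "Y \<in> Lp M p"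
    and bound: "\<And>n x. x \<in> space M \<Longrightarrow> \<bar>Z n x\<bar> \<le> \<bar>Y x\<bar>"
    and lim: "\<And>x. x \<in> space M \<Longrightarrow> (\<lambda>n. Z n x) \<longlonglongrightarrow> 0"
  shows "(\<lambda>n. \<integral>x. \<bar>Z n x\<bar> powr p \<partial>M) \<longlonglongrightarrow> 0"
proof -
  have "(\<lambda>n. \<integral>x. \<bar>Z n x\<bar> powr p \<partial>M) \<longlonglongrightarrow> (\<integral>x. 0 \<partial>M)"
  proof (rule integral_dominated_convergence[where w="\<lambda>x. \<bar>Y x\<bar> powr p"])
    show "(\<lambda>x. \<bar>Z n x\<bar> powr p) \<in> borel_measurable M" for n
      using Z[of n] by measurable
    show "AE x in M. (\<lambda>n. \<bar>Z n x\<bar> powr p) \<longlonglongrightarrow> 0"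
      using lim p by (intro AE_I2 tendsto_zero_powrI tendsto_rabs_zero) auto
    show "AE x in M. norm (\<bar>Z n x\<bar> powr p) \<le> \<bar>Y x\<bar> powr p" for n
      using bound p by (auto intro!: AE_I2 powr_mono2)
  qed (use LpD(2)[OF Y] in auto)
  then show ?thesis
    by simp
qed

lemma Lp_dominated_scaled_subsequence:
  assumes p: "0 < p" and Z: "\<And>n. Z n \<in> Lp M p"
    and lim: "(\<lambda>n. \<integral>x. \<bar>Z n x\<bar> powr p \<partial>M) \<longlonglongrightarrow> 0"
  obtains nk Y where "Y \<in> Lp M p" "\<And>k. AE x in M. (real k + 1) * \<bar>Z (nk k) x\<bar> \<le> Y x"
proof -
  define e where "e k = (1 / 2) ^ k / (real k + 1) powr p" for k
  have "\<exists>n. (\<integral>x. \<bar>Z n x\<bar> powr p \<partial>M) < e k" for k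
  proof -
    have "0 < e k"
      unfolding e_def by simp
    then have "eventually (\<lambda>n. (\<integral>x. \<bar>Z n x\<bar> powr p \<partial>M) < e k) sequentially"
      by (rule order_tendstoD(2)[OF lim])
    then show ?thesis
      by (auto simp: eventually_sequentially)
  qed
  then obtain nk where nk: "\<And>k. (\<integral>x. \<bar>Z (nk k) x\<bar> powr p \<partial>M) < e k"
    by metis
  define f where "f k x = (real k + 1) * Z (nk k) x" for k x
  have f: "f k \<in> Lp M p" for k
    unfolding f_def using Z by (rule Lp_cmult)
  have moment: "(\<integral>x. \<bar>f k x\<bar> powr p \<partial>M) \<le> (1 / 2) ^ k" for k
  proof -
    have "(\<integral>x. \<bar>f k x\<bar> powr p \<partial>M) = (real k + 1) powr p * (\<integral>x. \<bar>Z (nk k) x\<bar> powr p \<partial>M)"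
      unfolding f_def by (simp add: abs_mult powr_mult)
    also have "\<dots> \<le> (real k + 1) powr p * e k"
      using nk[of k] by (intro mult_left_mono) auto
    also have "\<dots> = (1 / 2) ^ k"
      unfolding e_def by simp
    finally show ?thesis .
  qed
  have "norm (\<integral>x. \<bar>f k x\<bar> powr p \<partial>M) \<le> (1 / 2) ^ k" for k
  proof -
    have "0 \<le> (\<integral>x. \<bar>f k x\<bar> powr p \<partial>M)"
      by (intro integral_nonneg_AE) simp
    then show ?thesis
      using moment[of k] by simp
  qed
  then have "summable (\<lambda>k. \<integral>x. \<bar>f k x\<bar> powr p \<partial>M)"
    by (intro summable_comparison_test'[OF summable_geometric[of "1 / 2"]]) simp_all
  then obtain Y where Y: "Y \<in> Lp M p" "\<And>k. AE x in M. \<bar>f k x\<bar> \<le> Y x"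
    using Lp_dominated_of_summable[where f=f, OF p f] by blast
  have "AE x in M. (real k + 1) * \<bar>Z (nk k) x\<bar> \<le> Y x" for k
    using Y(2)[of k] unfolding f_def by (simp add: abs_mult)
  with Y(1) show thesis
    by (rule that)
qed

section \<open>Upper semicontinuity in the weak topology\<close>

lemma continuous_map_weak_Lp_pairing:
  assumes "h \<in> Lp M r"
  shows "continuous_map (weak_Lp_topology M q r) euclideanreal (\<lambda>f. \<integral>x. f x * h x \<partial>M)"
proof -
  have "continuous_map (weak_Lp_topology M q r) euclideanreal
      ((\<lambda>k. k h) \<circ> (\<lambda>g. restrict (\<lambda>h. \<integral>x. g x * h x \<partial>M) (Lp M r)))"
    unfolding weak_Lp_topology_def
    by (intro continuous_map_pullback continuous_map_product_projection assms)
  then show ?thesis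
    using assms by (simp add: o_def)
qed

definition upper_semicontinuous_map :: "'a topology \<Rightarrow> ('a \<Rightarrow> 'b::linorder) \<Rightarrow> bool" where
  "upper_semicontinuous_map X f \<longleftrightarrow> (\<forall>a. openin X {x \<in> topspace X. f x < a})"

lemma continuous_imp_upper_semicontinuous_map:
  fixes f :: "'a \<Rightarrow> 'b::linorder_topology"
  shows "continuous_map X euclidean f \<Longrightarrow> upper_semicontinuous_map X f"
  by (simp add: continuous_map_upper_lower_semicontinuous_lt upper_semicontinuous_map_def)

lemma upper_semicontinuous_map_INF:
  fixes \<phi> :: "'i \<Rightarrow> 'a \<Rightarrow> 'b::complete_linorder"
  assumes "\<And>i. i \<in> I \<Longrightarrow> upper_semicontinuous_map X (\<phi> i)"
  shows "upper_semicontinuous_map X (\<lambda>x. INF i\<in>I. \<phi> i x)"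
proof -
  have "{x \<in> topspace X. (INF i\<in>I. \<phi> i x) < a} = (\<Union>i\<in>I. {x \<in> topspace X. \<phi> i x < a})" for a
    by (auto simp: INF_less_iff)
  then show ?thesis
    using assms unfolding upper_semicontinuous_map_def by auto
qed

lemma upper_semicontinuous_map_attains_sup:
  fixes f :: "'a \<Rightarrow> 'b::{complete_linorder, dense_linorder}"
  assumes K: "compactin X K" "K \<noteq> {}" and f: "upper_semicontinuous_map X f"
  shows "\<exists>x\<in>K. f x = (SUP y\<in>K. f y)"
proof (rule ccontr)
  define S where "S = (SUP y\<in>K. f y)"
  define U where "U a = {x \<in> topspace X. f x < a}" for a
  assume "\<not> (\<exists>x\<in>K. f x = (SUP y\<in>K. f y))"
  then have below: "f x < S" if "x \<in> K" for x
    using SUP_upper[OF that, of f] that unfolding S_def by (auto simp: order.order_iff_strict)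
  have "K \<subseteq> \<Union> (U ` {..<S})"
  proof
    fix x assume "x \<in> K"
    then obtain a where "f x < a" "a < S"
      using below dense by blast
    then show "x \<in> \<Union> (U ` {..<S})"
      using \<open>x \<in> K\<close> compactin_subset_topspace[OF K(1)] unfolding U_def by auto
  qed
  moreover have "openin X (U a)" for a
    using f unfolding upper_semicontinuous_map_def U_def by blast
  ultimately obtain \<F> where "finite \<F>" "\<F> \<subseteq> U ` {..<S}" "K \<subseteq> \<Union>\<F>"
    using K(1) unfolding compactin_def by (metis imageE)
  then obtain A where A: "finite A" "A \<subseteq> {..<S}" "K \<subseteq> \<Union> (U ` A)"
    by (metis finite_subset_image)
  with K(2) have "A \<noteq> {}" by auto
  have "S \<le> Max A"
    unfolding S_def
  proof (rule SUP_least)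
    fix y assume "y \<in> K"
    then obtain a where "a \<in> A" "f y < a"
      using A(3) unfolding U_def by auto
    then show "f y \<le> Max A"
      using A(1) by (meson Max_ge less_imp_le order.trans)
  qed
  moreover have "Max A < S"
    using A(1,2) \<open>A \<noteq> {}\<close> by auto
  ultimately show False
    by simp
qed

lemma upper_semicontinuous_map_INF_weak_Lp_pairing:
  assumes "\<And>i. i \<in> I \<Longrightarrow> h i \<in> Lp M r"
  shows "upper_semicontinuous_map (weak_Lp_topology M q r)
           (\<lambda>f. INF i\<in>I. ennreal (\<integral>x. f x * h i x \<partial>M))"
proof (rule upper_semicontinuous_map_INF)
  fix i assume "i \<in> I"
  have "continuous_map euclideanreal (euclidean :: ennreal topology) ennreal"
    by (simp add: continuous_on_ennreal continuous_on_id)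
  then have "continuous_map (weak_Lp_topology M q r) euclidean
      (ennreal \<circ> (\<lambda>f. \<integral>x. f x * h i x \<partial>M))"
    using continuous_map_weak_Lp_pairing[OF assms[OF \<open>i \<in> I\<close>]] by (rule continuous_map_compose[rotated])
  then show "upper_semicontinuous_map (weak_Lp_topology M q r) (\<lambda>f. ennreal (\<integral>x. f x * h i x \<partial>M))"
    by (simp add: o_def continuous_imp_upper_semicontinuous_map)
qed

section \<open>Linear functionals below a sublinear one\<close>

lemma cINF_mult_left:
  fixes f :: "'i \<Rightarrow> real"
  assumes "0 < l" "A \<noteq> {}" "bdd_below (f ` A)"
  shows "(INF a\<in>A. l * f a) = l * (INF a\<in>A. f a)"
proof -
  have "mono (\<lambda>x. l * x)"
    using assms(1) by (auto intro: monoI)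
  moreover have "continuous (at_right (Inf (f ` A))) (\<lambda>x. l * x)"
    by (intro continuous_intros)
  ultimately show ?thesis
    using continuous_at_Inf_mono[of "\<lambda>x. l * x" "f ` A"] assms(2,3) by (simp add: image_comp)
qed

definition sublinear_on :: "('a \<Rightarrow> real) set \<Rightarrow> (('a \<Rightarrow> real) \<Rightarrow> real) \<Rightarrow> bool" where
  "sublinear_on V q \<longleftrightarrow>
     (\<forall>x\<in>V. \<forall>y\<in>V. q (\<lambda>z. x z + y z) \<le> q x + q y) \<and>
     (\<forall>x\<in>V. \<forall>l\<ge>0. q (\<lambda>z. l * x z) = l * q x)"

definition linear_on :: "('a \<Rightarrow> real) set \<Rightarrow> (('a \<Rightarrow> real) \<Rightarrow> real) \<Rightarrow> bool" where
  "linear_on V L \<longleftrightarrow>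
     (\<forall>x\<in>V. \<forall>y\<in>V. L (\<lambda>z. x z + y z) = L x + L y) \<and>
     (\<forall>x\<in>V. \<forall>l. L (\<lambda>z. l * x z) = l * L x)"

lemma linear_onD:
  assumes "linear_on V L" "x \<in> V"
  shows "y \<in> V \<Longrightarrow> L (\<lambda>z. x z + y z) = L x + L y"
    and "L (\<lambda>z. l * x z) = l * L x"
  using assms unfolding linear_on_def by blast+

text \<open>Strict epigraphs turn the pointwise order on functionals into reversed inclusion, so
  that Zorn's lemma for \<open>\<subseteq>\<close> yields minimal sublinear functionals.\<close>

definition strict_epigraph :: "('a \<Rightarrow> real) set \<Rightarrow> (('a \<Rightarrow> real) \<Rightarrow> real) \<Rightarrow> (('a \<Rightarrow> real) \<times> real) set"
  where "strict_epigraph V q = {(x, t). x \<in> V \<and> q x < t}"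

lemma strict_epigraph_subset_iff:
  "strict_epigraph V q1 \<subseteq> strict_epigraph V q2 \<longleftrightarrow> (\<forall>x\<in>V. q2 x \<le> q1 x)"
proof
  assume sub: "strict_epigraph V q1 \<subseteq> strict_epigraph V q2"
  show "\<forall>x\<in>V. q2 x \<le> q1 x"
  proof (intro ballI leI notI)
    fix x assume "x \<in> V" "q1 x < q2 x"
    then have "(x, q2 x) \<in> strict_epigraph V q1"
      unfolding strict_epigraph_def by simp
    with sub show False
      unfolding strict_epigraph_def by auto
  qed
qed (force simp: strict_epigraph_def)

definition shift_INF :: "(('a \<Rightarrow> real) \<Rightarrow> real) \<Rightarrow> ('a \<Rightarrow> real) \<Rightarrow> ('a \<Rightarrow> real) \<Rightarrow> real" where
  "shift_INF p y x = (INF t\<in>{0..}. p (\<lambda>z. x z + t * y z) - t * p y)"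

lemma shift_INF_greatest:
  "(\<And>t. 0 \<le> t \<Longrightarrow> c \<le> p (\<lambda>z. x z + t * y z) - t * p y) \<Longrightarrow> c \<le> shift_INF p y x"
  unfolding shift_INF_def by (intro cINF_greatest) auto

locale function_subspace =
  fixes V :: "('a \<Rightarrow> real) set"
  assumes add_closed: "x \<in> V \<Longrightarrow> y \<in> V \<Longrightarrow> (\<lambda>z. x z + y z) \<in> V"
    and scale_closed: "x \<in> V \<Longrightarrow> (\<lambda>z. c * x z) \<in> V"
begin

lemma neg_closed: "x \<in> V \<Longrightarrow> (\<lambda>z. - x z) \<in> V"
  using scale_closed[of x "-1"] by simp

lemma sublinear_onD:
  assumes "sublinear_on V q" "x \<in> V"
  shows "y \<in> V \<Longrightarrow> q (\<lambda>z. x z + y z) \<le> q x + q y"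
    and "0 \<le> l \<Longrightarrow> q (\<lambda>z. l * x z) = l * q x"
  using assms unfolding sublinear_on_def by blast+

lemma sublinear_on_zero:
  assumes "sublinear_on V q" "x \<in> V"
  shows "q (\<lambda>z. 0) = 0"
  using sublinear_onD(2)[OF assms, of 0] by simp

lemma sublinear_on_neg_le:
  assumes "sublinear_on V q" "x \<in> V"
  shows "- q (\<lambda>z. - x z) \<le> q x"
proof -
  have "0 = q (\<lambda>z. x z + - x z)"
    using sublinear_on_zero[OF assms] by simp
  also have "\<dots> \<le> q x + q (\<lambda>z. - x z)"
    using sublinear_onD(1)[OF assms neg_closed[OF assms(2)]] .
  finally show ?thesis
    by simp
qed

lemma INF_chain_subadditive:
  assumes Q: "Q \<noteq> {}" "\<And>q. q \<in> Q \<Longrightarrow> sublinear_on V q"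
    and chain: "\<And>q1 q2. q1 \<in> Q \<Longrightarrow> q2 \<in> Q \<Longrightarrow> (\<forall>x\<in>V. q1 x \<le> q2 x) \<or> (\<forall>x\<in>V. q2 x \<le> q1 x)"
    and bdd: "\<And>x. x \<in> V \<Longrightarrow> bdd_below ((\<lambda>q. q x) ` Q)"
    and xy: "x \<in> V" "y \<in> V"
  shows "(INF q\<in>Q. q (\<lambda>z. x z + y z)) \<le> (INF q\<in>Q. q x) + (INF q\<in>Q. q y)"
proof -
  define s where "s = (INF q\<in>Q. q (\<lambda>z. x z + y z))"
  have "s - q2 y \<le> q1 x" if q12: "q1 \<in> Q" "q2 \<in> Q" for q1 q2
  proof -
    from chain[OF q12] obtain q where q: "q \<in> Q" "q x \<le> q1 x" "q y \<le> q2 y"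
      using q12 xy by blast
    have "s \<le> q (\<lambda>z. x z + y z)"
      unfolding s_def using bdd[OF add_closed[OF xy]] q(1) by (rule cINF_lower)
    also have "\<dots> \<le> q x + q y"
      using sublinear_onD(1)[OF Q(2)[OF q(1)] xy] .
    finally show ?thesis
      using q by linarith
  qed
  then have "s - q2 y \<le> (INF q\<in>Q. q x)" if "q2 \<in> Q" for q2
    using Q(1) that by (intro cINF_greatest) blast+
  then have "s - (INF q\<in>Q. q x) \<le> (INF q\<in>Q. q y)"
    using Q(1) by (intro cINF_greatest) (smt (verit))+
  then show ?thesis
    unfolding s_def by linarith
qed

lemma sublinear_on_INF:
  assumes Q: "Q \<noteq> {}" "\<And>q. q \<in> Q \<Longrightarrow> sublinear_on V q"
    and below: "\<forall>q\<in>Q. \<forall>x\<in>V. q x \<le> \<rho> x"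
    and chain: "\<And>q1 q2. q1 \<in> Q \<Longrightarrow> q2 \<in> Q \<Longrightarrow> (\<forall>x\<in>V. q1 x \<le> q2 x) \<or> (\<forall>x\<in>V. q2 x \<le> q1 x)"
  shows "sublinear_on V (\<lambda>x. INF q\<in>Q. q x)"
    and "\<And>q x. q \<in> Q \<Longrightarrow> x \<in> V \<Longrightarrow> (INF q\<in>Q. q x) \<le> q x"
proof -
  have bdd: "bdd_below ((\<lambda>q. q x) ` Q)" if "x \<in> V" for x
    using sublinear_on_neg_le[OF Q(2) that] below neg_closed[OF that]
    by (intro bdd_belowI[of _ "- \<rho> (\<lambda>z. - x z)"]) force
  then show "(INF q\<in>Q. q x) \<le> q x" if "q \<in> Q" "x \<in> V" for q x
    using that by (intro cINF_lower) auto
  have "(INF q\<in>Q. q (\<lambda>z. l * x z)) = l * (INF q\<in>Q. q x)" if "x \<in> V" "0 \<le> l" for x l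
  proof (cases "l = 0")
    case True
    have "(\<lambda>q. q (\<lambda>z. 0)) ` Q = {0}"
      using Q sublinear_on_zero[OF _ that(1)] by force
    then show ?thesis
      using True by simp
  next
    case False
    have "(INF q\<in>Q. q (\<lambda>z. l * x z)) = (INF q\<in>Q. l * q x)"
      using sublinear_onD(2)[OF Q(2) that] by simp
    also have "\<dots> = l * (INF q\<in>Q. q x)"
      using False that(2) Q(1) bdd[OF that(1)] by (intro cINF_mult_left) auto
    finally show ?thesis .
  qed
  then show "sublinear_on V (\<lambda>x. INF q\<in>Q. q x)"
    unfolding sublinear_on_def using INF_chain_subadditive[OF Q chain bdd] by blast
qed

lemma exists_minimal_sublinear_on_below:
  assumes \<rho>: "sublinear_on V \<rho>"
  obtains p where "sublinear_on V p" "\<forall>x\<in>V. p x \<le> \<rho> x"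
    "\<And>q. sublinear_on V q \<Longrightarrow> \<forall>x\<in>V. q x \<le> p x \<Longrightarrow> \<forall>x\<in>V. q x = p x"
proof -
  define K where "K = {q. sublinear_on V q \<and> (\<forall>x\<in>V. q x \<le> \<rho> x)}"
  have upper_bound: "\<exists>U\<in>strict_epigraph V ` K. \<forall>X\<in>C. X \<subseteq> U"
    if C: "subset.chain (strict_epigraph V ` K) C" for C
  proof (cases "C = {}")
    case False
    define Q where "Q = {q \<in> K. strict_epigraph V q \<in> C}"
    have C_eq: "C = strict_epigraph V ` Q"
      using C unfolding Q_def subset_chain_def by auto
    have Q: "Q \<noteq> {}" "\<And>q. q \<in> Q \<Longrightarrow> sublinear_on V q" "\<forall>q\<in>Q. \<forall>x\<in>V. q x \<le> \<rho> x"
      using C_eq False unfolding Q_def K_def by auto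
    have chain: "(\<forall>x\<in>V. q1 x \<le> q2 x) \<or> (\<forall>x\<in>V. q2 x \<le> q1 x)" if "q1 \<in> Q" "q2 \<in> Q" for q1 q2
      using C that unfolding C_eq subset_chain_def strict_epigraph_subset_iff[symmetric] by blast
    have INF_sublinear: "sublinear_on V (\<lambda>x. INF q\<in>Q. q x)"
      using Q chain by (rule sublinear_on_INF(1))
    have INF_le: "(INF q\<in>Q. q x) \<le> q x" if "q \<in> Q" "x \<in> V" for q x
      using Q chain that by (rule sublinear_on_INF(2))
    obtain q0 where "q0 \<in> Q"
      using Q(1) by blast
    then have "(\<lambda>x. INF q\<in>Q. q x) \<in> K"
      unfolding K_def using INF_sublinear INF_le Q(3) by (blast intro: order.trans)
    moreover have "\<forall>X\<in>C. X \<subseteq> strict_epigraph V (\<lambda>x. INF q\<in>Q. q x)"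
      unfolding C_eq using INF_le strict_epigraph_subset_iff by blast
    ultimately show ?thesis
      by (intro bexI[OF _ imageI])
  qed (use \<rho> in \<open>auto simp: K_def\<close>)
  have "\<exists>M\<in>strict_epigraph V ` K. \<forall>X\<in>strict_epigraph V ` K. M \<subseteq> X \<longrightarrow> X = M"
    by (rule subset_Zorn) (rule upper_bound)
  then obtain p where "p \<in> K"
    and p_max: "\<And>q. q \<in> K \<Longrightarrow> strict_epigraph V p \<subseteq> strict_epigraph V q \<Longrightarrow>
        strict_epigraph V q = strict_epigraph V p"
    by auto
  show thesis
  proof (rule that)
    show "sublinear_on V p" "\<forall>x\<in>V. p x \<le> \<rho> x"
      using \<open>p \<in> K\<close> unfolding K_def by auto
    show "\<forall>x\<in>V. q x = p x" if "sublinear_on V q" "\<forall>x\<in>V. q x \<le> p x" for q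
    proof -
      have "q \<in> K"
        using that \<open>p \<in> K\<close> unfolding K_def by (fastforce intro: order.trans)
      then show ?thesis
        using p_max strict_epigraph_subset_iff that(2) by (metis order.antisym subset_refl)
    qed
  qed
qed

lemma sublinear_on_shift_lower:
  assumes p: "sublinear_on V p" and "x \<in> V" "y \<in> V" "0 \<le> t"
  shows "- p (\<lambda>z. - x z) \<le> p (\<lambda>z. x z + t * y z) - t * p y"
proof -
  have "t * p y = p (\<lambda>z. (x z + t * y z) + - x z)"
    using sublinear_onD(2)[OF p \<open>y \<in> V\<close> \<open>0 \<le> t\<close>] by simp
  also have "\<dots> \<le> p (\<lambda>z. x z + t * y z) + p (\<lambda>z. - x z)"
    using assms by (intro sublinear_onD(1) add_closed scale_closed neg_closed)
  finally show ?thesis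
    by simp
qed

lemma bdd_below_shift:
  assumes "sublinear_on V p" "x \<in> V" "y \<in> V"
  shows "bdd_below ((\<lambda>t. p (\<lambda>z. x z + t * y z) - t * p y) ` {0..})"
  using sublinear_on_shift_lower[OF assms] by (auto intro!: bdd_belowI)

lemma shift_INF_le:
  assumes "sublinear_on V p" "x \<in> V" "y \<in> V" "0 \<le> t"
  shows "shift_INF p y x \<le> p (\<lambda>z. x z + t * y z) - t * p y"
  unfolding shift_INF_def using bdd_below_shift[OF assms(1-3)] assms(4) by (intro cINF_lower) auto

lemma shift_INF_subadditive:
  assumes p: "sublinear_on V p" and y: "y \<in> V" and xs: "x1 \<in> V" "x2 \<in> V"
  shows "shift_INF p y (\<lambda>z. x1 z + x2 z) \<le> shift_INF p y x1 + shift_INF p y x2"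
proof -
  let ?g = "\<lambda>x t. p (\<lambda>z. x z + t * y z) - t * p y"
  have shift_closed: "(\<lambda>z. x z + t * y z) \<in> V" if "x \<in> V" for x t
    using that y by (intro add_closed scale_closed)
  have "shift_INF p y (\<lambda>z. x1 z + x2 z) - ?g x2 t2 \<le> ?g x1 t1" if t: "0 \<le> t1" "0 \<le> t2" for t1 t2
  proof -
    have split: "(\<lambda>z. (x1 z + x2 z) + (t1 + t2) * y z) = (\<lambda>z. (x1 z + t1 * y z) + (x2 z + t2 * y z))"
      by (auto simp: algebra_simps)
    have "shift_INF p y (\<lambda>z. x1 z + x2 z) \<le> ?g (\<lambda>z. x1 z + x2 z) (t1 + t2)"
      using t xs by (intro shift_INF_le p add_closed y) auto
    also have "\<dots> \<le> ?g x1 t1 + ?g x2 t2"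
      unfolding split using sublinear_onD(1)[OF p shift_closed[OF xs(1)] shift_closed[OF xs(2)]]
      by (simp add: algebra_simps)
    finally show ?thesis
      by simp
  qed
  then have "shift_INF p y (\<lambda>z. x1 z + x2 z) - ?g x2 t2 \<le> shift_INF p y x1" if "0 \<le> t2" for t2
    using that by (intro shift_INF_greatest) blast
  then have "shift_INF p y (\<lambda>z. x1 z + x2 z) - shift_INF p y x1 \<le> shift_INF p y x2"
    by (intro shift_INF_greatest) (smt (verit))
  then show ?thesis
    by simp
qed

lemma shift_INF_cmult:
  assumes p: "sublinear_on V p" and y: "y \<in> V" and x: "x \<in> V" and "0 \<le> l"
  shows "shift_INF p y (\<lambda>z. l * x z) = l * shift_INF p y x"
proof (cases "l = 0")
  case True
  have "p (\<lambda>z. l * x z + t * y z) - t * p y = 0" if "0 \<le> t" for t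
    using sublinear_onD(2)[OF p y that] True by simp
  then have "(\<lambda>t. p (\<lambda>z. l * x z + t * y z) - t * p y) ` {0..} = {0}"
    by force
  then show ?thesis
    using True unfolding shift_INF_def by simp
next
  case False
  with \<open>0 \<le> l\<close> have l: "0 < l"
    by simp
  have reindex: "{0..} = (\<lambda>s. l * s) ` {0::real..}"
  proof (intro set_eqI iffI)
    fix t :: real assume "t \<in> {0..}"
    then show "t \<in> (\<lambda>s. l * s) ` {0..}"
      using l by (intro image_eqI[of _ _ "t / l"]) auto
  qed (use l in auto)
  have scale: "p (\<lambda>z. l * x z + l * s * y z) - l * s * p y = l * (p (\<lambda>z. x z + s * y z) - s * p y)" for s
  proof -
    have "(\<lambda>z. l * x z + l * s * y z) = (\<lambda>z. l * (x z + s * y z))"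
      by (simp add: distrib_left mult.assoc)
    then show ?thesis
      using sublinear_onD(2)[OF p add_closed[OF x scale_closed[OF y]] \<open>0 \<le> l\<close>, of s]
      by (simp add: algebra_simps)
  qed
  have "shift_INF p y (\<lambda>z. l * x z) = (INF s\<in>{0..}. l * (p (\<lambda>z. x z + s * y z) - s * p y))"
    unfolding shift_INF_def by (subst reindex) (simp add: image_comp scale)
  also have "\<dots> = l * shift_INF p y x"
    unfolding shift_INF_def using l bdd_below_shift[OF p x y] by (intro cINF_mult_left) auto
  finally show ?thesis .
qed

lemma sublinear_on_shift_INF:
  assumes "sublinear_on V p" "y \<in> V"
  shows "sublinear_on V (shift_INF p y)"
  using shift_INF_subadditive[OF assms] shift_INF_cmult[OF assms] unfolding sublinear_on_def by blast

lemma minimal_sublinear_on_odd: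
  assumes p: "sublinear_on V p"
    and minimal: "\<And>q. sublinear_on V q \<Longrightarrow> \<forall>x\<in>V. q x \<le> p x \<Longrightarrow> \<forall>x\<in>V. q x = p x"
    and y: "y \<in> V"
  shows "p (\<lambda>z. - y z) = - p y"
proof -
  \<comment> \<open>\<open>shift_INF p y\<close> is sublinear and below \<open>p\<close>, so it is \<open>p\<close>; at \<open>-y\<close> with \<open>t = 1\<close> it is at most \<open>- p y\<close>.\<close>
  have "\<forall>x\<in>V. shift_INF p y x \<le> p x"
    using shift_INF_le[OF p _ y, of _ 0] by simp
  then have "shift_INF p y (\<lambda>z. - y z) = p (\<lambda>z. - y z)"
    using minimal sublinear_on_shift_INF[OF p y] neg_closed[OF y] by blast
  moreover have "shift_INF p y (\<lambda>z. - y z) \<le> - p y"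
    using shift_INF_le[OF p neg_closed[OF y] y, of 1] sublinear_on_zero[OF p y] by simp
  ultimately show ?thesis
    using sublinear_on_neg_le[OF p y] by linarith
qed

lemma odd_sublinear_on_imp_linear_on:
  assumes p: "sublinear_on V p" and odd: "\<And>y. y \<in> V \<Longrightarrow> p (\<lambda>z. - y z) = - p y"
  shows "linear_on V p"
proof -
  have "p (\<lambda>z. x z + y z) = p x + p y" if "x \<in> V" "y \<in> V" for x y
  proof -
    have "- p (\<lambda>z. x z + y z) = p (\<lambda>z. - x z + - y z)"
      using odd[OF add_closed[OF that]] by simp
    also have "\<dots> \<le> - p x - p y"
      using sublinear_onD(1)[OF p neg_closed neg_closed, OF that] odd that by simp
    finally show ?thesis
      using sublinear_onD(1)[OF p that] by simp
  qed
  moreover have "p (\<lambda>z. l * x z) = l * p x" if "x \<in> V" for x l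
  proof (cases "0 \<le> l")
    case False
    then have "p (\<lambda>z. - ((- l) * x z)) = - ((- l) * p x)"
      using odd[OF scale_closed[OF that]] sublinear_onD(2)[OF p that, of "- l"] by simp
    then show ?thesis
      by simp
  qed (use sublinear_onD(2)[OF p that] in simp)
  ultimately show ?thesis
    unfolding linear_on_def by blast
qed

theorem sublinear_on_dominates_linear_on:
  assumes "sublinear_on V \<rho>"
  obtains L where "linear_on V L" "\<forall>x\<in>V. L x \<le> \<rho> x"
proof -
  obtain p where p: "sublinear_on V p" "\<forall>x\<in>V. p x \<le> \<rho> x"
    and minimal: "\<And>q. sublinear_on V q \<Longrightarrow> \<forall>x\<in>V. q x \<le> p x \<Longrightarrow> \<forall>x\<in>V. q x = p x"
    using exists_minimal_sublinear_on_below[OF assms] by blast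
  have "linear_on V p"
    using p(1) minimal_sublinear_on_odd[OF p(1) minimal] by (rule odd_sublinear_on_imp_linear_on)
  then show thesis
    using p(2) by (rule that)
qed

end

section \<open>Positive linear functionals on \<open>L\<^sup>p\<close> are integrals\<close>

lemma antimono_tendsto_zero_of_bound:
  fixes a :: "nat \<Rightarrow> real"
  assumes antimono: "\<And>m n. m \<le> n \<Longrightarrow> a n \<le> a m" and nonneg: "\<And>n. 0 \<le> a n"
    and bound: "\<And>k. a (nk k) \<le> C / (real k + 1)"
  shows "a \<longlonglongrightarrow> 0"
proof (rule LIMSEQ_I)
  fix r :: real assume "0 < r"
  obtain k :: nat where "C / r < real k"
    using reals_Archimedean2 by blast
  with \<open>0 < r\<close> have "C < r * (real k + 1)"
    by (simp add: pos_divide_less_eq algebra_simps)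
  then have "C / (real k + 1) < r"
    by (simp add: pos_divide_less_eq mult.commute)
  then have "norm (a n) < r" if "nk k \<le> n" for n
    using antimono[OF that] bound[of k] nonneg[of n] by simp
  then show "\<exists>no. \<forall>n\<ge>no. norm (a n - 0) < r"
    by auto
qed

lemma simple_function_real_indicator_representation:
  fixes g :: "'a \<Rightarrow> real"
  assumes "simple_function M g" "x \<in> space M"
  shows "g x = (\<Sum>y\<in>g ` space M. y * indicator (g -` {y} \<inter> space M) x)"
proof -
  have "g x = (\<Sum>y\<in>g ` space M. indicator (g -` {y} \<inter> space M) x *\<^sub>R y)"
    by (rule simple_function_indicator_representation_banach[OF assms])
  also have "\<dots> = (\<Sum>y\<in>g ` space M. y * indicator (g -` {y} \<inter> space M) x)"
    by (simp only: real_scaleR_def mult.commute)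
  finally show ?thesis .
qed

locale Lp_positive_functional = finite_measure M for M :: "'a measure" +
  fixes p :: real and L :: "('a \<Rightarrow> real) \<Rightarrow> real"
  assumes p_pos: "0 < p"
    and linear: "linear_on (Lp M p) L"
    and mono: "X \<in> Lp M p \<Longrightarrow> Y \<in> Lp M p \<Longrightarrow> AE x in M. X x \<le> Y x \<Longrightarrow> L X \<le> L Y"
begin

lemma L_add: "X \<in> Lp M p \<Longrightarrow> Y \<in> Lp M p \<Longrightarrow> L (\<lambda>x. X x + Y x) = L X + L Y"
  by (rule linear_onD(1)[OF linear])

lemma L_cmult: "X \<in> Lp M p \<Longrightarrow> L (\<lambda>x. c * X x) = c * L X"
  by (rule linear_onD(2)[OF linear])

lemma L_zero: "L (\<lambda>x. 0) = 0"
  using L_cmult[OF Lp_const, of 0 0] by simp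

lemma L_diff: "X \<in> Lp M p \<Longrightarrow> Y \<in> Lp M p \<Longrightarrow> L (\<lambda>x. X x - Y x) = L X - L Y"
  using L_add[OF _ Lp_cmult, of X Y "-1"] L_cmult[of Y "-1"] by simp

lemma L_nonneg: "X \<in> Lp M p \<Longrightarrow> AE x in M. 0 \<le> X x \<Longrightarrow> 0 \<le> L X"
  using mono[OF Lp_const] L_zero by metis

lemma L_cong_AE:
  assumes "X \<in> Lp M p" "Y \<in> Lp M p" "AE x in M. X x = Y x"
  shows "L X = L Y"
proof (rule order.antisym)
  show "L X \<le> L Y"
    using assms(3) by (intro mono assms(1,2)) auto
  show "L Y \<le> L X"
    using assms(3) by (intro mono assms(1,2)) auto
qed

lemma L_decreasing_tendsto_zero:
  assumes Z: "\<And>n. Z n \<in> borel_measurable M" "Z 0 \<in> Lp M p"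
    and nonneg: "\<And>n x. x \<in> space M \<Longrightarrow> 0 \<le> Z n x"
    and dec: "\<And>n x. x \<in> space M \<Longrightarrow> Z (Suc n) x \<le> Z n x"
    and lim: "\<And>x. x \<in> space M \<Longrightarrow> (\<lambda>n. Z n x) \<longlonglongrightarrow> 0"
  shows "(\<lambda>n. L (Z n)) \<longlonglongrightarrow> 0"
proof -
  have antimono: "Z n x \<le> Z m x" if "m \<le> n" "x \<in> space M" for m n x
    using lift_Suc_antimono_le[of "\<lambda>n. Z n x", OF dec[OF that(2)] that(1)] .
  have Z_Lp: "Z n \<in> Lp M p" for n
    using antimono[of 0 n] nonneg p_pos by (intro Lp_bound[OF Z(1) Z(2)]) (auto intro!: AE_I2)
  have "(\<lambda>n. \<integral>x. \<bar>Z n x\<bar> powr p \<partial>M) \<longlonglongrightarrow> 0"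
    using antimono[of 0] nonneg by (intro integral_powr_tendsto_zero[OF p_pos Z] lim) auto
  then obtain nk Y where Y: "Y \<in> Lp M p"
    and dominated: "\<And>k. AE x in M. (real k + 1) * \<bar>Z (nk k) x\<bar> \<le> Y x"
    using Lp_dominated_scaled_subsequence[where Z=Z, OF p_pos Z_Lp] by blast
  show ?thesis
  proof (rule antimono_tendsto_zero_of_bound)
    show "L (Z n) \<le> L (Z m)" if "m \<le> n" for m n
      using antimono that by (intro mono[OF Z_Lp Z_Lp] AE_I2)
    show "0 \<le> L (Z n)" for n
      using nonneg by (intro L_nonneg[OF Z_Lp] AE_I2)
    show "L (Z (nk k)) \<le> L Y / (real k + 1)" for k
    proof -
      have "AE x in M. (real k + 1) * Z (nk k) x \<le> Y x"
        using dominated[of k] AE_space by eventually_elim (simp add: abs_of_nonneg nonneg)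
      then have "L (\<lambda>x. (real k + 1) * Z (nk k) x) \<le> L Y"
        by (rule mono[OF Lp_cmult[OF Z_Lp] Y])
      then have "(real k + 1) * L (Z (nk k)) \<le> L Y"
        unfolding L_cmult[OF Z_Lp] .
      then show ?thesis
        by (simp add: field_simps)
    qed
  qed
qed

lemma L_sum:
  assumes "finite S" "\<And>i. i \<in> S \<Longrightarrow> h i \<in> Lp M p"
  shows "L (\<lambda>x. \<Sum>i\<in>S. h i x) = (\<Sum>i\<in>S. L (h i))"
  using assms
proof (induction S rule: finite_induct)
  case (insert i S)
  then show ?case
    using L_add[of "h i" "\<lambda>x. \<Sum>i\<in>S. h i x"] Lp_sum[OF insert(1) _ _ Lp_const] p_pos by simp
qed (simp add: L_zero)

lemma indicator_Lp: "A \<in> sets M \<Longrightarrow> indicator A \<in> Lp M p"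
  using p_pos by (intro Lp_bound[where g="\<lambda>x. 1", OF _ Lp_const] AE_I2) (auto simp: indicator_def)

definition functional_measure :: "'a measure" where
  "functional_measure = measure_of (space M) (sets M) (\<lambda>A. ennreal (L (indicator A)))"

lemma sets_functional_measure [simp, measurable_cong]: "sets functional_measure = sets M"
  unfolding functional_measure_def by (simp add: sets_measure_of sets.space_closed)

lemma space_functional_measure [simp]: "space functional_measure = space M"
  unfolding functional_measure_def by (simp add: space_measure_of_conv)

lemma L_indicator_Union_lessThan:
  fixes A :: "nat \<Rightarrow> 'a set"
  assumes A: "range A \<subseteq> sets M" "disjoint_family A"
  shows "L (indicator (\<Union>i<n. A i)) = (\<Sum>i<n. L (indicator (A i)))"
proof (induction n)
  case (Suc n)
  have "indicator (\<Union>i<Suc n. A i) = (\<lambda>x. indicator (\<Union>i<n. A i) x + indicator (A n) x :: real)"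
    using A(2) unfolding disjoint_family_on_def
    by (auto simp: lessThan_Suc indicator_def fun_eq_iff) (metis disjoint_iff less_irrefl)
  moreover have "(\<Union>i<n. A i) \<in> sets M"
    using A(1) by auto
  ultimately show ?case
    using Suc A(1) L_add[OF indicator_Lp indicator_Lp, of "\<Union>i<n. A i" "A n"] by auto
qed (simp add: L_zero)

lemma L_indicator_sums:
  fixes A :: "nat \<Rightarrow> 'a set"
  assumes A: "range A \<subseteq> sets M" "disjoint_family A" "\<Union> (range A) \<in> sets M"
  shows "(\<lambda>i. L (indicator (A i))) sums L (indicator (\<Union> (range A)))"
proof -
  define U where "U = \<Union> (range A)"
  define B where "B n = (\<Union>i<n. A i)" for n
  define Z where "Z n = (indicator (U - B n) :: 'a \<Rightarrow> real)" for n
  have B_sets: "B n \<in> sets M" for n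
    unfolding B_def using A(1) by auto
  have "(\<lambda>n. L (Z n)) \<longlonglongrightarrow> 0"
  proof (rule L_decreasing_tendsto_zero)
    show "Z n \<in> borel_measurable M" for n
      unfolding Z_def using A(3) B_sets unfolding U_def by measurable
    show "Z 0 \<in> Lp M p"
      unfolding Z_def B_def U_def using A(3) by (simp add: indicator_Lp)
    show "Z (Suc n) x \<le> Z n x" for n x
      unfolding Z_def B_def by (auto simp: indicator_def lessThan_Suc)
    show "(\<lambda>n. Z n x) \<longlonglongrightarrow> 0" for x
    proof (cases "x \<in> U")
      case True
      then obtain i where "x \<in> A i"
        unfolding U_def by auto
      then have "\<forall>n\<ge>Suc i. Z n x = 0"
        unfolding Z_def B_def by (auto simp: indicator_def)
      then show ?thesis
        by (intro tendsto_eventually) (auto simp: eventually_sequentially)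
    qed (simp add: Z_def)
  qed (simp add: Z_def)
  moreover have "L (Z n) = L (indicator U) - (\<Sum>i<n. L (indicator (A i)))" for n
  proof -
    have "indicator U = (\<lambda>x. Z n x + indicator (B n) x :: real)"
      unfolding Z_def U_def B_def by (auto simp: indicator_def fun_eq_iff)
    then show ?thesis
      using L_add[OF indicator_Lp indicator_Lp, of "U - B n" "B n"] A(3) B_sets
        L_indicator_Union_lessThan[OF A(1,2)]
      unfolding Z_def U_def B_def by auto
  qed
  ultimately have "(\<lambda>n. \<Sum>i<n. L (indicator (A i))) \<longlonglongrightarrow> L (indicator U)"
    using tendsto_diff[OF tendsto_const, of "\<lambda>n. L (Z n)" 0 _ "L (indicator U)"] by simp
  then show ?thesis
    unfolding U_def by (simp add: sums_def)
qed

lemma countably_additive_L_indicator: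
  "countably_additive (sets M) (\<lambda>A. ennreal (L (indicator A)))"
proof (unfold countably_additive_def, intro allI impI)
  fix A :: "nat \<Rightarrow> 'a set"
  assume A: "range A \<subseteq> sets M" "disjoint_family A" "\<Union> (range A) \<in> sets M"
  have "(\<Sum>i. ennreal (L (indicator (A i)))) = ennreal (\<Sum>i. L (indicator (A i)))"
    using A(1) L_indicator_sums[OF A]
    by (intro suminf_ennreal2 L_nonneg indicator_Lp) (auto simp: sums_summable)
  then show "(\<Sum>i. ennreal (L (indicator (A i)))) = ennreal (L (indicator (\<Union> (range A))))"
    using L_indicator_sums[OF A] by (simp add: sums_iff)
qed

lemma emeasure_functional_measure:
  "A \<in> sets M \<Longrightarrow> emeasure functional_measure A = ennreal (L (indicator A))"
  unfolding functional_measure_def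
  using L_nonneg[OF indicator_Lp] L_zero countably_additive_L_indicator
  by (intro emeasure_measure_of_sigma sets.sigma_algebra_axioms)
    (auto simp: positive_def indicator_def[abs_def])

lemma absolutely_continuous_functional_measure: "absolutely_continuous M functional_measure"
  unfolding absolutely_continuous_def
proof
  fix A assume A: "A \<in> null_sets M"
  then have "L (indicator A) \<le> L (\<lambda>x. 0)"
    using AE_not_in[OF A] by (intro mono indicator_Lp Lp_const) (auto elim!: AE_mp)
  then have "L (indicator A) = 0"
    using A L_zero L_nonneg[OF indicator_Lp] by (auto intro: order.antisym)
  then show "A \<in> null_sets functional_measure"
    using A by (simp add: null_sets_def emeasure_functional_measure)
qed

lemma prob_space_functional_measure:
  assumes "L (\<lambda>x. 1) = 1"
  shows "prob_space functional_measure"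
proof
  have "L (indicator (space M)) = L (\<lambda>x. 1)"
    by (intro L_cong_AE indicator_Lp Lp_const AE_I2) auto
  then show "emeasure functional_measure (space functional_measure) = 1"
    using assms by (simp add: emeasure_functional_measure)
qed

lemma simple_function_Lp:
  assumes g: "simple_function M g"
  shows "g \<in> Lp M p"
    and "L g = (\<Sum>y\<in>g ` space M. y * L (indicator (g -` {y} \<inter> space M)))"
proof -
  define S where "S = g ` space M"
  define B where "B y = g -` {y} \<inter> space M" for y
  have S: "finite S"
    using g unfolding S_def simple_function_def by auto
  have B: "B y \<in> sets M" for y
    unfolding B_def using g by (rule simple_functionD(2))
  have repr_Lp: "(\<lambda>x. \<Sum>y\<in>S. y * indicator (B y) x) \<in> Lp M p"
    using p_pos by (intro Lp_sum S Lp_cmult indicator_Lp B Lp_const) auto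
  have repr: "g x = (\<Sum>y\<in>S. y * indicator (B y) x)" if "x \<in> space M" for x
    unfolding S_def B_def using g that by (rule simple_function_real_indicator_representation)
  have "g \<in> borel_measurable M"
    using g by (rule borel_measurable_simple_function)
  then show g_Lp: "g \<in> Lp M p"
    using repr p_pos by (intro Lp_bound[OF _ repr_Lp] AE_I2) auto
  have "L g = L (\<lambda>x. \<Sum>y\<in>S. y * indicator (B y) x)"
    using repr by (intro L_cong_AE g_Lp repr_Lp AE_I2) auto
  also have "\<dots> = (\<Sum>y\<in>S. L (\<lambda>x. y * indicator (B y) x))"
    using S B by (intro L_sum Lp_cmult indicator_Lp)
  also have "\<dots> = (\<Sum>y\<in>S. y * L (indicator (B y)))"
    using B by (intro sum.cong refl L_cmult indicator_Lp)
  finally show "L g = (\<Sum>y\<in>g ` space M. y * L (indicator (g -` {y} \<inter> space M)))"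
    unfolding S_def B_def .
qed

lemma nn_integral_functional_measure_simple:
  assumes g: "simple_function M g" and nonneg: "\<And>x. x \<in> space M \<Longrightarrow> 0 \<le> g x"
  shows "(\<integral>\<^sup>+ x. ennreal (g x) \<partial>functional_measure) = ennreal (L g)"
proof -
  define S where "S = g ` space M"
  define B where "B y = g -` {y} \<inter> space M" for y
  have S: "finite S" and S_nonneg: "\<And>y. y \<in> S \<Longrightarrow> 0 \<le> y"
    using g nonneg unfolding S_def simple_function_def by auto
  have B: "B y \<in> sets M" for y
    unfolding B_def using g by (rule simple_functionD(2))
  have L_B_nonneg: "0 \<le> L (indicator (B y))" for y
    using B by (intro L_nonneg indicator_Lp) auto
  have "(\<integral>\<^sup>+ x. ennreal (g x) \<partial>functional_measure)
      = (\<integral>\<^sup>+ x. (\<Sum>y\<in>S. ennreal y * indicator (B y) x) \<partial>functional_measure)"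
  proof (intro nn_integral_cong)
    fix x assume "x \<in> space functional_measure"
    then have "ennreal (g x) = (\<Sum>y\<in>S. ennreal (y * indicator (B y) x))"
      unfolding S_def B_def using S_nonneg[unfolded S_def]
      by (subst simple_function_real_indicator_representation[OF g]) (auto intro: sum_ennreal[symmetric])
    also have "\<dots> = (\<Sum>y\<in>S. ennreal y * indicator (B y) x)"
      by (intro sum.cong refl) (simp add: indicator_def)
    finally show "ennreal (g x) = (\<Sum>y\<in>S. ennreal y * indicator (B y) x)" .
  qed
  also have "\<dots> = (\<Sum>y\<in>S. ennreal y * emeasure functional_measure (B y))"
    using B by (simp add: nn_integral_sum nn_integral_cmult_indicator)
  also have "\<dots> = ennreal (\<Sum>y\<in>S. y * L (indicator (B y)))"
    using B S_nonneg L_B_nonneg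
    by (simp add: emeasure_functional_measure ennreal_mult sum_ennreal[symmetric] cong: sum.cong)
  also have "\<dots> = ennreal (L g)"
    unfolding simple_function_Lp(2)[OF g] S_def B_def ..
  finally show ?thesis .
qed

lemma nn_integral_functional_measure:
  assumes X: "X \<in> Lp M p" and nonneg: "\<And>x. 0 \<le> X x"
  shows "(\<integral>\<^sup>+ x. ennreal (X x) \<partial>functional_measure) = ennreal (L X)"
proof -
  obtain s where s_inc: "incseq s" and s_simple: "\<And>i. simple_function M (s i)"
    and s_bdd: "\<And>x. bdd_above (range (\<lambda>i. s i x))" and s_nonneg: "\<And>i x. 0 \<le> s i x"
    and X_SUP: "X = (SUP i. s i)"
    using borel_measurable_implies_simple_function_sequence_real[OF LpD(1)[OF X] nonneg] by blast
  have s_inc': "incseq (\<lambda>i. s i x)" for x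
    using s_inc by (auto simp: incseq_def le_fun_def)
  have s_lim: "(\<lambda>i. s i x) \<longlonglongrightarrow> X x" for x
    unfolding X_SUP SUP_apply using s_bdd s_inc' by (rule LIMSEQ_incseq_SUP)
  have s_le: "s i x \<le> X x" for i x
    unfolding X_SUP SUP_apply using s_bdd by (intro cSUP_upper) auto
  have s_Lp: "s i \<in> Lp M p" for i
    using s_simple by (rule simple_function_Lp)
  have "(\<lambda>n. L (\<lambda>x. X x - s n x)) \<longlonglongrightarrow> 0"
  proof (rule L_decreasing_tendsto_zero)
    show "(\<lambda>x. X x - s n x) \<in> borel_measurable M" for n
      using LpD(1)[OF X] LpD(1)[OF s_Lp] by measurable
    show "(\<lambda>x. X x - s 0 x) \<in> Lp M p"
      using X s_Lp p_pos by (intro Lp_diff) auto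
    show "(\<lambda>n. X x - s n x) \<longlonglongrightarrow> 0" for x
      using tendsto_diff[OF tendsto_const s_lim, of "X x" x] by simp
  qed (use s_le s_inc' in \<open>auto simp: incseq_Suc_iff\<close>)
  then have "(\<lambda>n. L X - L (\<lambda>x. X x - s n x)) \<longlonglongrightarrow> L X - 0"
    by (intro tendsto_diff tendsto_const)
  then have "(\<lambda>n. ennreal (L (s n))) \<longlonglongrightarrow> ennreal (L X)"
    using L_diff[OF X s_Lp] by (intro tendsto_ennrealI) simp
  moreover have "(\<lambda>n. \<integral>\<^sup>+ x. ennreal (s n x) \<partial>functional_measure)
      \<longlonglongrightarrow> (\<integral>\<^sup>+ x. ennreal (X x) \<partial>functional_measure)"
  proof (rule nn_integral_LIMSEQ)
    show "incseq (\<lambda>n x. ennreal (s n x))"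
      using s_inc by (auto simp: incseq_def le_fun_def intro: ennreal_leI)
    show "(\<lambda>x. ennreal (s n x)) \<in> borel_measurable functional_measure" for n
      using LpD(1)[OF s_Lp] by measurable
  qed (intro tendsto_ennrealI s_lim)
  ultimately show ?thesis
    using nn_integral_functional_measure_simple[OF s_simple s_nonneg] LIMSEQ_unique by simp
qed

lemma integrable_functional_measure:
  assumes X: "X \<in> Lp M p"
  shows "integrable functional_measure X"
    and "(\<integral>x. X x \<partial>functional_measure) = L X"
proof -
  have nonneg_case: "integrable functional_measure Y \<and> (\<integral>x. Y x \<partial>functional_measure) = L Y"
    if Y: "Y \<in> Lp M p" "\<And>x. 0 \<le> Y x" for Y
  proof
    have "Y \<in> borel_measurable functional_measure"
      using LpD(1)[OF Y(1)] by measurable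
    then show int: "integrable functional_measure Y"
      using nn_integral_functional_measure[OF Y] Y(2) by (intro integrableI_nonneg) auto
    have "ennreal (\<integral>x. Y x \<partial>functional_measure) = ennreal (L Y)"
      using nn_integral_eq_integral[OF int] nn_integral_functional_measure[OF Y] Y(2) by simp
    then show "(\<integral>x. Y x \<partial>functional_measure) = L Y"
      using Y L_nonneg[OF Y(1)] by (simp add: integral_nonneg_AE)
  qed
  define Xp where "Xp x = max (X x) 0" for x
  define Xn where "Xn x = max (- X x) 0" for x
  have parts: "Xp \<in> Lp M p" "Xn \<in> Lp M p"
    unfolding Xp_def Xn_def using X p_pos LpD(1)[OF X]
    by (auto intro!: Lp_bound[OF _ X] AE_I2)
  have X_eq: "X = (\<lambda>x. Xp x - Xn x)"
    unfolding Xp_def Xn_def by (auto simp: fun_eq_iff max_def)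
  have Xp: "integrable functional_measure Xp" "(\<integral>x. Xp x \<partial>functional_measure) = L Xp"
    using nonneg_case[OF parts(1)] unfolding Xp_def by auto
  have Xn: "integrable functional_measure Xn" "(\<integral>x. Xn x \<partial>functional_measure) = L Xn"
    using nonneg_case[OF parts(2)] unfolding Xn_def by auto
  show "integrable functional_measure X"
    using Xp(1) Xn(1) by (subst X_eq) auto
  show "(\<integral>x. X x \<partial>functional_measure) = L X"
    using Xp Xn L_diff[OF parts] by (subst (1 2) X_eq) simp
qed

end

lemma (in finite_measure) Lp_positive_functional_below_sublinear_operator:
  assumes \<rho>: "sublinear_operator M p \<rho>" and p: "0 < p"
    and L: "linear_on (Lp M p) L" and L_le: "\<forall>X\<in>Lp M p. L X \<le> \<rho> X"
  shows "Lp_positive_functional M p L" and "L (\<lambda>x. 1) = 1"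
proof -
  have \<rho>_mono: "\<rho> X \<le> \<rho> Y" if "X \<in> Lp M p" "Y \<in> Lp M p" "AE x in M. X x \<le> Y x" for X Y
    using \<rho> that unfolding sublinear_operator_def by blast
  have \<rho>_const: "\<rho> (\<lambda>x. c) = c" for c
    using \<rho> unfolding sublinear_operator_def by blast
  have L_le_const: "L (\<lambda>x. c) \<le> c" for c
    using L_le Lp_const[of c p] \<rho>_const[of c] by force
  have L_diff: "L (\<lambda>x. X x - Y x) = L X - L Y" if "X \<in> Lp M p" "Y \<in> Lp M p" for X Y
    using linear_onD(1)[OF L that(1) Lp_cmult[OF that(2), of "- 1"]] linear_onD(2)[OF L that(2), of "- 1"]
    by simp
  show "Lp_positive_functional M p L"
  proof
    show "L X \<le> L Y" if XY: "X \<in> Lp M p" "Y \<in> Lp M p" "AE x in M. X x \<le> Y x" for X Y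
    proof -
      have "L X - L Y \<le> \<rho> (\<lambda>x. X x - Y x)"
        using L_le Lp_diff[OF XY(1,2)] L_diff[OF XY(1,2)] p by (metis less_imp_le)
      also have "\<dots> \<le> \<rho> (\<lambda>x. 0)"
        using XY(3) p by (intro \<rho>_mono Lp_diff XY(1,2) Lp_const) auto
      finally show ?thesis
        using \<rho>_const[of 0] by simp
    qed
  qed (use p L in auto)
  have "L (\<lambda>x. - 1) = - L (\<lambda>x. 1)"
    using linear_onD(2)[OF L Lp_const, of "- 1" 1] by simp
  then show "L (\<lambda>x. 1) = 1"
    using L_le_const[of 1] L_le_const[of "- 1"] by simp
qed

lemma rep_set_nonempty:
  assumes "prob_space M" and \<rho>: "sublinear_operator M p \<rho>" and p: "0 < p"
  shows "rep_set M p \<rho> \<noteq> {}"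
proof -
  interpret prob_space M
    by (rule assms(1))
  interpret function_subspace "Lp M p"
    using p by unfold_locales (auto intro: Lp_add Lp_cmult)
  have "sublinear_on (Lp M p) \<rho>"
    using \<rho> unfolding sublinear_operator_def sublinear_on_def by blast
  then obtain L where L: "linear_on (Lp M p) L" "\<forall>X\<in>Lp M p. L X \<le> \<rho> X"
    by (rule sublinear_on_dominates_linear_on)
  interpret Lp_positive_functional M p L
    using Lp_positive_functional_below_sublinear_operator(1)[OF \<rho> p L] .
  have "functional_measure \<in> rep_set M p \<rho>"
    unfolding rep_set_def
    using Lp_positive_functional_below_sublinear_operator(2)[OF \<rho> p L] L(2)
      prob_space_functional_measure absolutely_continuous_functional_measure
      integrable_functional_measure by auto
  then show ?thesis
    by blast
qed

section \<open>Attainment of the supremum\<close>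

lemma (in sigma_finite_measure) nn_integral_dens:
  assumes P: "sets P = sets M" "absolutely_continuous M P" "sigma_finite_measure P"
    and g: "g \<in> borel_measurable M" "\<And>x. 0 \<le> g x" "integrable M (\<lambda>x. dens M P x * g x)"
  shows "(\<integral>\<^sup>+ x. ennreal (g x) \<partial>P) = ennreal (\<integral>x. dens M P x * g x \<partial>M)"
proof -
  have "(\<integral>\<^sup>+ x. ennreal (g x) \<partial>P) = (\<integral>\<^sup>+ x. ennreal (g x) \<partial>density M (RN_deriv M P))"
    using density_RN_deriv[OF P(2,1)] by simp
  also have "\<dots> = (\<integral>\<^sup>+ x. RN_deriv M P x * ennreal (g x) \<partial>M)"
    using g(1) by (intro nn_integral_density) auto
  also have "\<dots> = (\<integral>\<^sup>+ x. ennreal (dens M P x * g x) \<partial>M)"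
    using RN_deriv_finite[OF P(3,2,1)]
  proof (intro nn_integral_cong_AE, eventually_elim)
    case (elim x)
    then show ?case
      unfolding dens_def using g(2)[of x] by (cases "RN_deriv M P x") (auto simp: ennreal_mult)
  qed
  also have "\<dots> = ennreal (\<integral>x. dens M P x * g x \<partial>M)"
    using g by (intro nn_integral_eq_integral) (auto simp: dens_def)
  finally show ?thesis .
qed

lemma nn_integral_rep_set:
  assumes "prob_space M" "P \<in> rep_set M p \<rho>"
    and "dens M P \<in> Lp M q" "g \<in> Lp M r" "\<And>x. 0 \<le> g x"
    and "1 < q" "1 < r" "1 / q + 1 / r = 1"
  shows "(\<integral>\<^sup>+ x. ennreal (g x) \<partial>P) = ennreal (\<integral>x. dens M P x * g x \<partial>M)"
proof -
  interpret prob_space M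
    by (rule assms(1))
  have "sets P = sets M" "absolutely_continuous M P" "sigma_finite_measure P"
    using assms(2) prob_space_imp_sigma_finite unfolding rep_set_def by auto
  then show ?thesis
    using assms(3-8) LpD(1)[OF assms(4)] by (intro nn_integral_dens integrable_mult_conjugate_Lp)
qed

lemma conjugate_exponents:
  fixes \<epsilon> :: real
  assumes "0 < \<epsilon>"
  shows "1 < 1 + 2 / \<epsilon>" "1 < 1 + \<epsilon> / 2" "1 / (1 + 2 / \<epsilon>) + 1 / (1 + \<epsilon> / 2) = 1"
proof -
  have "1 / (1 + 2 / \<epsilon>) = \<epsilon> / (\<epsilon> + 2)" "1 / (1 + \<epsilon> / 2) = 2 / (\<epsilon> + 2)"
    using assms by (simp_all add: field_simps)
  moreover have "\<epsilon> / (\<epsilon> + 2) + 2 / (\<epsilon> + 2) = 1"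
    using assms by (simp add: add_divide_distrib[symmetric])
  ultimately show "1 / (1 + 2 / \<epsilon>) + 1 / (1 + \<epsilon> / 2) = 1"
    by simp
qed (use assms in simp_all)

lemma (in finite_measure) Lp_square_diff:
  assumes "0 < \<epsilon>" "\<xi> \<in> Lp M (4 + 2 * \<epsilon>)" "\<eta> \<in> Lp M (2 + \<epsilon>)"
  shows "(\<lambda>x. (\<xi> x - \<eta> x)\<^sup>2) \<in> Lp M (1 + \<epsilon> / 2)"
proof (rule Lp_square)
  have "\<xi> \<in> Lp M (2 + \<epsilon>)"
    using Lp_antimono[of "2 + \<epsilon>" "4 + 2 * \<epsilon>"] assms(1,2) by auto
  then show "(\<lambda>x. \<xi> x - \<eta> x) \<in> Lp M (2 * (1 + \<epsilon> / 2))"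
    using assms(1,3) by (simp add: Lp_diff algebra_simps)
qed

theorem corollary1:
  fixes M C :: "'a measure" and \<epsilon> :: real and \<rho> :: "('a \<Rightarrow> real) \<Rightarrow> real"
    and \<xi> :: "'a \<Rightarrow> real"
  assumes "prob_space M" and "complete_measure M"
    and "0 < \<epsilon>" and "\<epsilon> < 1"
    and "subalgebra M C"
    and "sublinear_operator M (2 + \<epsilon>) \<rho>"
    and equiv: "\<forall>P\<in>rep_set M (2 + \<epsilon>) \<rho>. absolutely_continuous P M"
    and bounded: "\<exists>B. \<forall>f\<in>dens_set M (2 + \<epsilon>) \<rho>. f \<in> Lp M (1 + 2 / \<epsilon>) \<and> Lp_norm M (1 + 2 / \<epsilon>) f \<le> B"
    and compact: "compactin (weak_Lp_topology M (1 + 2 / \<epsilon>) (1 + \<epsilon> / 2)) (dens_set M (2 + \<epsilon>) \<rho>)"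
    and "stable M C (2 + \<epsilon>) \<rho>"
    and "\<xi> \<in> Lp M (4 + 2 * \<epsilon>)"
  shows "\<exists>P\<in>rep_set M (2 + \<epsilon>) \<rho>.
           (INF \<eta>\<in>Lp_sub M C (2 + \<epsilon>). \<integral>\<^sup>+ x. ennreal ((\<xi> x - \<eta> x)\<^sup>2) \<partial>P)
         = (SUP Q\<in>rep_set M (2 + \<epsilon>) \<rho>. INF \<eta>\<in>Lp_sub M C (2 + \<epsilon>). \<integral>\<^sup>+ x. ennreal ((\<xi> x - \<eta> x)\<^sup>2) \<partial>Q)"
proof -
  interpret prob_space M
    by (rule assms(1))
  define R where "R = rep_set M (2 + \<epsilon>) \<rho>"
  define Ls where "Ls = Lp_sub M C (2 + \<epsilon>)"
  define q where "q = 1 + 2 / \<epsilon>"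
  define r where "r = 1 + \<epsilon> / 2"
  define \<Phi> where "\<Phi> f = (INF \<eta>\<in>Ls. ennreal (\<integral>x. f x * (\<xi> x - \<eta> x)\<^sup>2 \<partial>M))" for f
  have conjugate: "1 < q" "1 < r" "1 / q + 1 / r = 1"
    using conjugate_exponents[OF \<open>0 < \<epsilon>\<close>] unfolding q_def r_def by auto
  have square_Lp: "(\<lambda>x. (\<xi> x - \<eta> x)\<^sup>2) \<in> Lp M r" if "\<eta> \<in> Ls" for \<eta>
    using Lp_square_diff[OF \<open>0 < \<epsilon>\<close> \<open>\<xi> \<in> Lp M (4 + 2 * \<epsilon>)\<close>] that
    unfolding Ls_def Lp_sub_def r_def by auto
  have value_eq: "(INF \<eta>\<in>Ls. \<integral>\<^sup>+ x. ennreal ((\<xi> x - \<eta> x)\<^sup>2) \<partial>P) = \<Phi> (dens M P)" if "P \<in> R" for P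
    unfolding \<Phi>_def using that bounded square_Lp conjugate unfolding R_def dens_set_def q_def
    by (intro INF_cong refl nn_integral_rep_set[OF assms(1)]) auto
  have "upper_semicontinuous_map (weak_Lp_topology M q r) \<Phi>"
    unfolding \<Phi>_def using square_Lp by (rule upper_semicontinuous_map_INF_weak_Lp_pairing)
  moreover have "dens_set M (2 + \<epsilon>) \<rho> \<noteq> {}"
    using rep_set_nonempty[OF assms(1,6)] \<open>0 < \<epsilon>\<close> unfolding dens_set_def by auto
  ultimately obtain P where "P \<in> R" "\<Phi> (dens M P) = (SUP Q\<in>R. \<Phi> (dens M Q))"
    using upper_semicontinuous_map_attains_sup[OF compact[folded q_def r_def]]
    unfolding dens_set_def R_def by (auto simp: image_comp)
  then show ?thesis
    using value_eq unfolding R_def Ls_def by (metis (no_types, lifting) SUP_cong)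
qed

end
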